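(* Let $A=\prod_{i=1}^n A_i$ where each $A_i$ is either $\mathsf P^1$ or $\mathbb F_2$, equipped with the product bicharacter. Let $\mathcal G,\mathcal M\subseteq A$ be subgroups (gauge group and measurement group) with $\mathcal G\subseteq\mathcal M^\perp$. Let $\Gamma\subseteq 2^{[n]}$ and let $P=\mathop{\ast}_{\gamma\in\Gamma}P_\gamma$ be a probability distribution on $A$, where each $P_\gamma$ is a probability distribution on $A$ with $P_\gamma(e)=0$ unless $\operatorname{supp}(e)\subseteq\gamma$. Suppose $P$ is correctable, meaning: (1) for all $\gamma_1,\gamma_2\in\Gamma$, $\gamma_1\cup\gamma_2$ is a correctable region, and (2) all moments $E(a)=\sum_{e\in A}\langle a,e\rangle P(e)$ are positive for all $a\in A$. Then the logical channel $P_L(e)=\frac{1}{|\mathcal G|}\sum_{s\in\mathcal G}P(es)$ is uniquely determined by the moments $E(s)$, $s\in\mathcal M$; i.e. any two correctable channels with the same $\Gamma$ whose moments agree on $\mathcal M$ have the same logical channel.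
   Context: $\mathsf P^1$ is the single-qubit Pauli group modulo phases, $\{I,X,Y,Z\}$, with bicharacter $\langle a,b\rangle=+1$ if $a,b$ commute and $-1$ otherwise; on $\mathbb F_2$ the bicharacter is $\langle x,y\rangle=(-1)^{xy}$. The product bicharacter on $A$ is $\langle a,b\rangle=\prod_i\langle a_i,b_i\rangle$. For a subgroup $B\subseteq A$, $B^\perp=\{a\in A:\langle a,b\rangle=1\ \forall b\in B\}$. The support of $a\in A$ is $\{i:a_i\neq I\}$ (identity element). A region $R\subseteq[n]$ is correctable if every $e\in\mathcal M^\perp$ with $\operatorname{supp}(e)\subseteq R$ lies in $\mathcal G$. Convolution: $(f\ast g)(a)=\sum_{b\in A}f(b)g(ab^{-1})$. *)

theory Defs
  imports Complex_Main
begin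

text \<open>The single-qubit Pauli group modulo phases.\<close>
datatype pauli = PI | PX | PY | PZ

fun pmul :: "pauli \<Rightarrow> pauli \<Rightarrow> pauli" where
  "pmul PI q = q"
| "pmul p PI = p"
| "pmul PX PX = PI" | "pmul PX PY = PZ" | "pmul PX PZ = PY"
| "pmul PY PX = PZ" | "pmul PY PY = PI" | "pmul PY PZ = PX"
| "pmul PZ PX = PY" | "pmul PZ PY = PX" | "pmul PZ PZ = PI"

definition pcommute :: "pauli \<Rightarrow> pauli \<Rightarrow> bool" where
  "pcommute p q \<longleftrightarrow> p = PI \<or> q = PI \<or> p = q"

text \<open>A site value is either an element of P^1 or of F_2 (False = 0, True = 1).\<close>
datatype site = Pa pauli | Fb bool

fun smul :: "site \<Rightarrow> site \<Rightarrow> site" where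
  "smul (Pa p) (Pa q) = Pa (pmul p q)"
| "smul (Fb x) (Fb y) = Fb (x \<noteq> y)"
| "smul _ _ = Pa PI"   \<comment> \<open>never used: kinds never mix\<close>

fun sbich :: "site \<Rightarrow> site \<Rightarrow> real" where
  "sbich (Pa p) (Pa q) = (if pcommute p q then 1 else -1)"
| "sbich (Fb x) (Fb y) = (if x \<and> y then -1 else 1)"
| "sbich _ _ = 1"

text \<open>K i = True means A_i = P^1, K i = False means A_i = F_2, for i < n.
  Elements of A are functions nat => site; coordinates i >= n are fixed to Pa PI.\<close>

type_synonym elt = "nat \<Rightarrow> site"

definition carrierA :: "nat \<Rightarrow> (nat \<Rightarrow> bool) \<Rightarrow> elt set" where
  "carrierA n K = {a. (\<forall>i<n. (K i \<longrightarrow> (\<exists>p. a i = Pa p)) \<and> (\<not> K i \<longrightarrow> (\<exists>x. a i = Fb x)))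
                     \<and> (\<forall>i\<ge>n. a i = Pa PI)}"

definition oneA :: "nat \<Rightarrow> (nat \<Rightarrow> bool) \<Rightarrow> elt" where
  "oneA n K = (\<lambda>i. if i < n \<and> \<not> K i then Fb False else Pa PI)"

definition amul :: "elt \<Rightarrow> elt \<Rightarrow> elt" where
  "amul a b = (\<lambda>i. smul (a i) (b i))"

text \<open>Every element is its own inverse.\<close>
definition ainv :: "elt \<Rightarrow> elt" where
  "ainv a = a"

definition bich :: "nat \<Rightarrow> elt \<Rightarrow> elt \<Rightarrow> real" where
  "bich n a b = (\<Prod>i<n. sbich (a i) (b i))"

definition is_subgroup :: "nat \<Rightarrow> (nat \<Rightarrow> bool) \<Rightarrow> elt set \<Rightarrow> bool" where
  "is_subgroup n K H \<longleftrightarrow> H \<subseteq> carrierA n K \<and> oneA n K \<in> H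
     \<and> (\<forall>a\<in>H. \<forall>b\<in>H. amul a b \<in> H) \<and> (\<forall>a\<in>H. ainv a \<in> H)"

definition perp :: "nat \<Rightarrow> (nat \<Rightarrow> bool) \<Rightarrow> elt set \<Rightarrow> elt set" where
  "perp n K B = {a \<in> carrierA n K. \<forall>b\<in>B. bich n a b = 1}"

definition supp :: "nat \<Rightarrow> elt \<Rightarrow> nat set" where
  "supp n a = {i. i < n \<and> a i \<noteq> Pa PI \<and> a i \<noteq> Fb False}"

definition correctable_region ::
  "nat \<Rightarrow> (nat \<Rightarrow> bool) \<Rightarrow> elt set \<Rightarrow> elt set \<Rightarrow> nat set \<Rightarrow> bool" where
  "correctable_region n K G M R \<longleftrightarrow>
     (\<forall>e\<in>perp n K M. supp n e \<subseteq> R \<longrightarrow> e \<in> G)"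

definition prob_dist :: "nat \<Rightarrow> (nat \<Rightarrow> bool) \<Rightarrow> (elt \<Rightarrow> real) \<Rightarrow> bool" where
  "prob_dist n K p \<longleftrightarrow> (\<forall>e\<in>carrierA n K. 0 \<le> p e) \<and> (\<Sum>e\<in>carrierA n K. p e) = 1"

definition conv :: "nat \<Rightarrow> (nat \<Rightarrow> bool) \<Rightarrow> (elt \<Rightarrow> real) \<Rightarrow> (elt \<Rightarrow> real) \<Rightarrow> elt \<Rightarrow> real" where
  "conv n K f g a = (if a \<in> carrierA n K
      then (\<Sum>b\<in>carrierA n K. f b * g (amul a (ainv b))) else 0)"

definition delta_one :: "nat \<Rightarrow> (nat \<Rightarrow> bool) \<Rightarrow> elt \<Rightarrow> real" where
  "delta_one n K a = (if a = oneA n K then 1 else 0)"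

text \<open>Convolution of a finite family (given as a list enumerating it; the
  empty convolution is the point mass at the identity).\<close>
definition conv_list :: "nat \<Rightarrow> (nat \<Rightarrow> bool) \<Rightarrow> (elt \<Rightarrow> real) list \<Rightarrow> elt \<Rightarrow> real" where
  "conv_list n K fs = foldr (conv n K) fs (delta_one n K)"

definition moment :: "nat \<Rightarrow> (nat \<Rightarrow> bool) \<Rightarrow> (elt \<Rightarrow> real) \<Rightarrow> elt \<Rightarrow> real" where
  "moment n K P a = (\<Sum>e\<in>carrierA n K. bich n a e * P e)"

definition logical_channel :: "elt set \<Rightarrow> (elt \<Rightarrow> real) \<Rightarrow> elt \<Rightarrow> real" where
  "logical_channel G P e = (1 / real (card G)) * (\<Sum>s\<in>G. P (amul e s))"

text \<open>A channel P = conv over gamma in Gamma of P_gamma, with Gamma enumerated by gs.\<close>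
definition local_family ::
  "nat \<Rightarrow> (nat \<Rightarrow> bool) \<Rightarrow> nat set list \<Rightarrow> (nat set \<Rightarrow> elt \<Rightarrow> real) \<Rightarrow> bool" where
  "local_family n K gs Pg \<longleftrightarrow> (\<forall>\<gamma>\<in>set gs. prob_dist n K (Pg \<gamma>)
      \<and> (\<forall>e\<in>carrierA n K. \<not> supp n e \<subseteq> \<gamma> \<longrightarrow> Pg \<gamma> e = 0))"

definition channel :: "nat \<Rightarrow> (nat \<Rightarrow> bool) \<Rightarrow> nat set list \<Rightarrow> (nat set \<Rightarrow> elt \<Rightarrow> real) \<Rightarrow> elt \<Rightarrow> real" where
  "channel n K gs Pg = conv_list n K (map Pg gs)"

end

theory Submission
  imports Defs
begin

(*
  The moment function E is the Fourier transform of A and turns convolution into pointwise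
  products, so D = log E_P - log E_Q is a sum over gamma of functions that depend only on the
  coordinates in gamma. Hence the transform c of D is supported on errors contained in a single
  region gamma. Since D vanishes on M, Poisson summation shows that c sums to zero over every
  coset of M^perp. Two errors of one coset, supported in gamma1 and gamma2, differ by an element
  of M^perp supported in gamma1 \<union> gamma2, i.e. by a gauge element, so for a in G^perp the
  character <a,-> takes the same value on both. Therefore the transform of c, which is |A| D,
  vanishes on G^perp; and the logical channel, an average over a coset of G, depends only on
  the moments on G^perp.
*)

section \<open>Single sites\<close>

(* Coordinates i >= n carry the padding value Pa PI, so they count as Pauli sites. *)
definition pauli_kind :: "nat \<Rightarrow> (nat \<Rightarrow> bool) \<Rightarrow> nat \<Rightarrow> bool" where
  "pauli_kind n K i \<longleftrightarrow> n \<le> i \<or> K i"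

definition of_kind :: "bool \<Rightarrow> site \<Rightarrow> bool" where
  "of_kind k s = (case s of Pa _ \<Rightarrow> k | Fb _ \<Rightarrow> \<not> k)"

definition site_one :: "bool \<Rightarrow> site" where
  "site_one k = (if k then Pa PI else Fb False)"

lemma pmul_commute: "pmul p q = pmul q p"
  by (cases p; cases q) auto

lemma pmul_assoc: "pmul (pmul p q) r = pmul p (pmul q r)"
  by (cases p; cases q; cases r) auto

lemma pmul_self [simp]: "pmul p p = PI"
  by (cases p) auto

lemma pmul_PI_right [simp]: "pmul p PI = p"
  by (cases p) auto

lemma pcommute_sym: "pcommute p q \<longleftrightarrow> pcommute q p"
  by (auto simp: pcommute_def)

lemma pcommute_sign_pmul:
  "((if pcommute p (pmul q r) then 1 else -1) :: real) =
   (if pcommute p q then 1 else -1) * (if pcommute p r then 1 else -1)"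
  by (cases p; cases q; cases r) (auto simp: pcommute_def)

lemma exists_not_pcommute: "q \<noteq> PI \<Longrightarrow> \<exists>p. \<not> pcommute p q"
  by (cases q) (auto simp: pcommute_def intro: exI[of _ PX] exI[of _ PZ])

lemma smul_commute: "smul s t = smul t s"
  by (cases s; cases t) (auto simp: pmul_commute)

lemma smul_assoc:
  "of_kind k s \<Longrightarrow> of_kind k t \<Longrightarrow> of_kind k u \<Longrightarrow> smul (smul s t) u = smul s (smul t u)"
  by (cases s; cases t; cases u) (auto simp: of_kind_def pmul_assoc)

lemma smul_self: "of_kind k s \<Longrightarrow> smul s s = site_one k"
  by (cases s) (auto simp: of_kind_def site_one_def)

lemma smul_site_one: "of_kind k s \<Longrightarrow> smul s (site_one k) = s"
  by (cases s) (auto simp: of_kind_def site_one_def)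

lemma of_kind_smul: "of_kind k s \<Longrightarrow> of_kind k t \<Longrightarrow> of_kind k (smul s t)"
  by (cases s; cases t) (auto simp: of_kind_def)

lemma of_kind_site_one: "of_kind k (site_one k)"
  by (auto simp: of_kind_def site_one_def)

lemma sbich_sym: "sbich s t = sbich t s"
  by (cases s; cases t) (auto simp: pcommute_sym)

lemma sbich_smul:
  "of_kind k s \<Longrightarrow> of_kind k t \<Longrightarrow> of_kind k u \<Longrightarrow> sbich s (smul t u) = sbich s t * sbich s u"
  by (cases s; cases t; cases u) (auto simp: of_kind_def pcommute_sign_pmul)

lemma sbich_identity [simp]: "sbich s (Pa PI) = 1" "sbich s (Fb False) = 1"
  by (cases s; simp add: pcommute_def)+

lemma sbich_site_one [simp]: "sbich s (site_one k) = 1" "sbich (site_one k) s = 1"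
  by (simp_all add: site_one_def sbich_sym[of "Pa PI"] sbich_sym[of "Fb False"])

lemma sbich_square: "sbich s t * sbich s t = 1"
  by (cases s; cases t) auto

lemma exists_sbich_minus_one:
  assumes "of_kind k t" and "t \<noteq> site_one k"
  shows "\<exists>s. of_kind k s \<and> sbich s t = -1"
proof (cases t)
  case (Pa q)
  with assms have "k" "q \<noteq> PI" by (auto simp: of_kind_def site_one_def)
  then obtain p where "\<not> pcommute p q" using exists_not_pcommute by blast
  with Pa \<open>k\<close> show ?thesis by (intro exI[of _ "Pa p"]) (auto simp: of_kind_def)
next
  case (Fb x)
  with assms have "\<not> k" "x" by (auto simp: of_kind_def site_one_def)
  with Fb show ?thesis by (intro exI[of _ "Fb True"]) (auto simp: of_kind_def)
qed

section \<open>The group A\<close>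

lemma carrierA_iff:
  "a \<in> carrierA n K \<longleftrightarrow> (\<forall>i. of_kind (pauli_kind n K i) (a i)) \<and> (\<forall>i\<ge>n. a i = Pa PI)"
proof
  assume a: "a \<in> carrierA n K"
  have "of_kind (pauli_kind n K i) (a i)" for i
    using a by (cases "i < n") (auto simp: carrierA_def pauli_kind_def of_kind_def)
  with a show "(\<forall>i. of_kind (pauli_kind n K i) (a i)) \<and> (\<forall>i\<ge>n. a i = Pa PI)"
    by (auto simp: carrierA_def)
next
  assume a: "(\<forall>i. of_kind (pauli_kind n K i) (a i)) \<and> (\<forall>i\<ge>n. a i = Pa PI)"
  have "(K i \<longrightarrow> (\<exists>p. a i = Pa p)) \<and> (\<not> K i \<longrightarrow> (\<exists>x. a i = Fb x))" if "i < n" for i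
    using a[THEN conjunct1, rule_format, of i] that
    by (cases "a i") (auto simp: of_kind_def pauli_kind_def)
  with a show "a \<in> carrierA n K" by (auto simp: carrierA_def)
qed

lemma oneA_eq_site_one: "oneA n K i = site_one (pauli_kind n K i)"
  by (auto simp: oneA_def site_one_def pauli_kind_def)

lemma oneA_in_carrierA: "oneA n K \<in> carrierA n K"
  by (auto simp: carrierA_iff oneA_eq_site_one of_kind_site_one) (auto simp: pauli_kind_def site_one_def)

lemma amul_in_carrierA: "a \<in> carrierA n K \<Longrightarrow> b \<in> carrierA n K \<Longrightarrow> amul a b \<in> carrierA n K"
  by (auto simp: carrierA_iff amul_def of_kind_smul)

lemma amul_commute: "amul a b = amul b a"
  by (auto simp: amul_def smul_commute)

lemma amul_assoc:
  "a \<in> carrierA n K \<Longrightarrow> b \<in> carrierA n K \<Longrightarrow> c \<in> carrierA n K \<Longrightarrow>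
   amul (amul a b) c = amul a (amul b c)"
  by (auto simp: carrierA_iff amul_def intro!: smul_assoc)

lemma amul_self: "a \<in> carrierA n K \<Longrightarrow> amul a a = oneA n K"
  by (rule ext) (auto simp: carrierA_iff amul_def oneA_eq_site_one intro!: smul_self)

lemma amul_oneA: "a \<in> carrierA n K \<Longrightarrow> amul a (oneA n K) = a"
  by (auto simp: carrierA_iff amul_def oneA_eq_site_one intro!: smul_site_one)

lemma amul_amul_cancel: "a \<in> carrierA n K \<Longrightarrow> b \<in> carrierA n K \<Longrightarrow> amul (amul a b) b = a"
  by (simp add: amul_assoc amul_self amul_oneA)

lemma amul_amul_left_cancel:
  assumes a: "a \<in> carrierA n K" and b: "b \<in> carrierA n K" and c: "c \<in> carrierA n K"
  shows "amul (amul a b) (amul a c) = amul b c"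
proof -
  have "amul (amul a b) (amul a c) = amul b (amul a (amul a c))"
    using a b c by (simp add: amul_commute[of a b] amul_assoc amul_in_carrierA)
  also have "\<dots> = amul b (amul (oneA n K) c)"
    using a c by (simp add: amul_assoc[symmetric] amul_self)
  also have "\<dots> = amul b c"
    using c by (simp add: amul_commute[of "oneA n K"] amul_oneA)
  finally show ?thesis .
qed

lemma amul_eq_oneA_iff:
  "a \<in> carrierA n K \<Longrightarrow> b \<in> carrierA n K \<Longrightarrow> amul a b = oneA n K \<longleftrightarrow> a = b"
  by (metis amul_amul_cancel amul_commute amul_oneA amul_self)

lemma finite_carrierA: "finite (carrierA n K)"
proof -
  have "(UNIV :: pauli set) = {PI, PX, PY, PZ}"
    using pauli.exhaust by auto
  moreover have "(UNIV :: site set) \<subseteq> range Pa \<union> range Fb"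
  proof
    fix s :: site
    show "s \<in> range Pa \<union> range Fb"
      by (cases s) auto
  qed
  ultimately have "finite (UNIV :: site set)"
    by (metis finite.emptyI finite.insertI finite_UNIV finite_Un finite_imageI finite_subset)
  then have "finite {a. \<forall>i. (i \<in> {..<n} \<longrightarrow> a i \<in> UNIV) \<and> (i \<notin> {..<n} \<longrightarrow> a i = Pa PI)}"
    by (intro finite_set_of_finite_funs) auto
  then show ?thesis
    by (rule finite_subset[rotated]) (auto simp: carrierA_def)
qed

lemma supp_eq:
  assumes "a \<in> carrierA n K"
  shows "supp n a = {i. i < n \<and> a i \<noteq> oneA n K i}"
proof -
  have "(a i \<noteq> Pa PI \<and> a i \<noteq> Fb False) \<longleftrightarrow> a i \<noteq> oneA n K i" for i
    using assms[unfolded carrierA_iff, THEN conjunct1, rule_format, of i]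
    by (cases "a i") (auto simp: oneA_eq_site_one site_one_def of_kind_def)
  then show ?thesis
    by (auto simp: supp_def)
qed

lemma supp_amul_subset:
  assumes a: "a \<in> carrierA n K" and b: "b \<in> carrierA n K"
  shows "supp n (amul a b) \<subseteq> supp n a \<union> supp n b"
proof
  fix i
  assume i: "i \<in> supp n (amul a b)"
  show "i \<in> supp n a \<union> supp n b"
  proof (rule ccontr)
    assume "i \<notin> supp n a \<union> supp n b"
    moreover have "i < n"
      using i by (simp add: supp_def)
    ultimately have "a i = oneA n K i" "b i = oneA n K i"
      by (auto simp: supp_eq[OF a] supp_eq[OF b])
    then have "amul a b i = oneA n K i"
      by (simp add: amul_def oneA_eq_site_one smul_self[OF of_kind_site_one])
    with i show False
      by (simp add: supp_eq[OF amul_in_carrierA[OF a b]])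
  qed
qed

lemma bich_sym: "bich n a b = bich n b a"
  by (simp add: bich_def sbich_sym)

lemma bich_amul:
  "a \<in> carrierA n K \<Longrightarrow> b \<in> carrierA n K \<Longrightarrow> c \<in> carrierA n K \<Longrightarrow>
   bich n a (amul b c) = bich n a b * bich n a c"
  by (auto simp: bich_def amul_def carrierA_iff prod.distrib[symmetric] intro!: prod.cong sbich_smul)

lemma bich_amul_left:
  "a \<in> carrierA n K \<Longrightarrow> b \<in> carrierA n K \<Longrightarrow> c \<in> carrierA n K \<Longrightarrow>
   bich n (amul b c) a = bich n b a * bich n c a"
  by (metis bich_amul bich_sym)

lemma bich_oneA [simp]: "bich n a (oneA n K) = 1" "bich n (oneA n K) a = 1"
  by (simp_all add: bich_def oneA_eq_site_one)

lemma bich_square: "bich n a b * bich n a b = 1"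
  by (simp add: bich_def prod.distrib[symmetric] sbich_square)

lemma bich_neq_one: "bich n a b \<noteq> 1 \<Longrightarrow> bich n a b = -1"
  by (metis bich_square square_eq_1_iff)

lemma is_subgroup_carrierA: "is_subgroup n K (carrierA n K)"
  by (simp add: is_subgroup_def ainv_def oneA_in_carrierA amul_in_carrierA)

lemma subgroup_subset_carrierA: "is_subgroup n K H \<Longrightarrow> H \<subseteq> carrierA n K"
  by (simp add: is_subgroup_def)

lemma subgroup_amul: "is_subgroup n K H \<Longrightarrow> a \<in> H \<Longrightarrow> b \<in> H \<Longrightarrow> amul a b \<in> H"
  by (simp add: is_subgroup_def)

lemma finite_subgroup: "is_subgroup n K H \<Longrightarrow> finite H"
  using finite_carrierA subgroup_subset_carrierA by (rule finite_subset[rotated])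

lemma card_subgroup_pos: "is_subgroup n K H \<Longrightarrow> card H > 0"
  by (auto simp: card_gt_0_iff finite_subgroup is_subgroup_def)

lemma sum_subgroup_shift:
  assumes H: "is_subgroup n K H" and b: "b \<in> H"
  shows "(\<Sum>x\<in>H. f (amul x b)) = (\<Sum>x\<in>H. f x)"
proof -
  have "amul (amul x b) b = x" if "x \<in> H" for x
    using subgroup_subset_carrierA[OF H] b that by (blast intro: amul_amul_cancel)
  then show ?thesis
    by (intro sum.reindex_bij_witness[where i="\<lambda>x. amul x b" and j="\<lambda>x. amul x b"])
      (auto simp: subgroup_amul[OF H] b)
qed

lemma perp_subset_carrierA: "perp n K B \<subseteq> carrierA n K"
  by (simp add: perp_def)

lemma is_subgroup_perp: "B \<subseteq> carrierA n K \<Longrightarrow> is_subgroup n K (perp n K B)"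
  by (auto simp: is_subgroup_def perp_def ainv_def oneA_in_carrierA amul_in_carrierA bich_amul_left)

section \<open>Fourier analysis on A\<close>

lemma sum_bich_subgroup:
  assumes H: "is_subgroup n K H" and x: "x \<in> carrierA n K"
  shows "(\<Sum>m\<in>H. bich n m x) = (if x \<in> perp n K H then real (card H) else 0)"
proof (cases "x \<in> perp n K H")
  case True
  then show ?thesis
    by (simp add: perp_def bich_sym[of n _ x])
next
  case False
  with x obtain m0 where m0: "m0 \<in> H" "bich n m0 x \<noteq> 1"
    by (auto simp: perp_def bich_sym[of n x])
  have "(\<Sum>m\<in>H. bich n m x) = (\<Sum>m\<in>H. bich n (amul m m0) x)"
    using sum_subgroup_shift[OF H m0(1), of "\<lambda>m. bich n m x"] by simp
  also have "\<dots> = (\<Sum>m\<in>H. - bich n m x)"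
  proof (rule sum.cong[OF refl])
    fix m
    assume "m \<in> H"
    then have "bich n (amul m m0) x = bich n m x * bich n m0 x"
      using subgroup_subset_carrierA[OF H] m0(1) x by (blast intro: bich_amul_left)
    then show "bich n (amul m m0) x = - bich n m x"
      using bich_neq_one[OF m0(2)] by simp
  qed
  also have "\<dots> = - (\<Sum>m\<in>H. bich n m x)"
    by (simp add: sum_negf)
  finally show ?thesis
    using False by simp
qed

lemma exists_bich_minus_one_at:
  assumes e: "e \<in> carrierA n K" and i: "i \<in> supp n e"
  obtains b where "b \<in> carrierA n K" "\<forall>j. j \<noteq> i \<longrightarrow> b j = oneA n K j" "bich n b e = -1"
proof -
  have "i < n" "e i \<noteq> oneA n K i"
    using i supp_eq[OF e] by auto
  moreover have "of_kind (pauli_kind n K i) (e i)"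
    using e by (simp add: carrierA_iff)
  ultimately obtain s where s: "of_kind (pauli_kind n K i) s" "sbich s (e i) = -1"
    using exists_sbich_minus_one oneA_eq_site_one by metis
  define b where "b = (oneA n K)(i := s)"
  have "b \<in> carrierA n K"
    using s(1) oneA_in_carrierA \<open>i < n\<close> unfolding b_def carrierA_iff by auto
  moreover have "bich n b e = sbich (b i) (e i) * (\<Prod>j\<in>{..<n} - {i}. sbich (b j) (e j))"
    unfolding bich_def using \<open>i < n\<close> by (simp add: prod.remove)
  then have "bich n b e = -1"
    using s by (simp add: b_def oneA_eq_site_one)
  ultimately show ?thesis
    using that by (simp add: b_def)
qed

lemma perp_carrierA: "perp n K (carrierA n K) = {oneA n K}"
proof (intro equalityI subsetI)
  fix x
  assume x: "x \<in> perp n K (carrierA n K)"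
  then have xC: "x \<in> carrierA n K"
    by (simp add: perp_def)
  show "x \<in> {oneA n K}"
  proof (rule ccontr)
    assume "x \<notin> {oneA n K}"
    then obtain i where "x i \<noteq> oneA n K i"
      by auto
    moreover from this have "i < n"
      using xC by (cases "i < n") (auto simp: carrierA_iff oneA_def)
    ultimately have "i \<in> supp n x"
      by (simp add: supp_eq[OF xC])
    then obtain b where "b \<in> carrierA n K" "bich n b x = -1"
      using exists_bich_minus_one_at[OF xC] by metis
    with x show False
      by (auto simp: perp_def bich_sym[of n x])
  qed
qed (simp add: perp_def oneA_in_carrierA)

lemma sum_bich_carrierA:
  "x \<in> carrierA n K \<Longrightarrow>
   (\<Sum>a\<in>carrierA n K. bich n a x) = (if x = oneA n K then real (card (carrierA n K)) else 0)"
  using sum_bich_subgroup[OF is_subgroup_carrierA] by (simp add: perp_carrierA)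

(* Fourier inversion for the moment transform; there is no sign flip because A has exponent 2. *)
lemma moment_moment:
  assumes x: "x \<in> carrierA n K"
  shows "moment n K (moment n K f) x = real (card (carrierA n K)) * f x"
proof -
  let ?C = "carrierA n K"
  have "moment n K (moment n K f) x = (\<Sum>a\<in>?C. \<Sum>y\<in>?C. f y * bich n a (amul x y))"
    unfolding moment_def sum_distrib_left
    using x by (intro sum.cong refl) (simp add: bich_amul bich_sym[of n x] mult_ac)
  also have "\<dots> = (\<Sum>y\<in>?C. f y * (\<Sum>a\<in>?C. bich n a (amul x y)))"
    by (subst sum.swap) (simp add: sum_distrib_left)
  also have "\<dots> = (\<Sum>y\<in>?C. if y = x then real (card ?C) * f x else 0)"
    using x by (intro sum.cong refl)
      (simp add: sum_bich_carrierA amul_in_carrierA amul_eq_oneA_iff eq_commute[of x])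
  also have "\<dots> = real (card ?C) * f x"
    using x by (simp add: finite_carrierA)
  finally show ?thesis .
qed

lemma poisson_summation:
  assumes M: "is_subgroup n K M" and e: "e \<in> carrierA n K"
  shows "real (card (carrierA n K)) * (\<Sum>m\<in>M. f m * bich n m e)
    = real (card M) * (\<Sum>u\<in>perp n K M. moment n K f (amul e u))"
proof -
  let ?C = "carrierA n K"
  have MC: "M \<subseteq> ?C"
    using subgroup_subset_carrierA[OF M] .
  have "real (card ?C) * (\<Sum>m\<in>M. f m * bich n m e) = (\<Sum>m\<in>M. moment n K (moment n K f) m * bich n m e)"
    using MC by (simp add: sum_distrib_left moment_moment subset_iff mult.assoc)
  also have "\<dots> = (\<Sum>m\<in>M. \<Sum>x\<in>?C. moment n K f x * bich n m (amul x e))"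
  proof (rule sum.cong[OF refl])
    fix m
    assume "m \<in> M"
    with MC e show "moment n K (moment n K f) m * bich n m e
        = (\<Sum>x\<in>?C. moment n K f x * bich n m (amul x e))"
      unfolding moment_def[of n K "moment n K f"] sum_distrib_right
      by (intro sum.cong refl) (auto simp: bich_amul mult_ac)
  qed
  also have "\<dots> = (\<Sum>x\<in>?C. moment n K f x * (\<Sum>m\<in>M. bich n m (amul x e)))"
    by (subst sum.swap) (simp add: sum_distrib_left)
  also have "\<dots> = (\<Sum>x\<in>?C. if amul x e \<in> perp n K M then real (card M) * moment n K f x else 0)"
    using e by (intro sum.cong refl) (simp add: sum_bich_subgroup[OF M] amul_in_carrierA)
  also have "\<dots> = real (card M) * (\<Sum>x\<in>?C. if amul x e \<in> perp n K M then moment n K f x else 0)"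
    unfolding sum_distrib_left by (intro sum.cong) simp_all
  also have "\<dots> = real (card M) * (\<Sum>x\<in>{x\<in>?C. amul x e \<in> perp n K M}. moment n K f x)"
    by (simp add: sum.inter_filter finite_carrierA)
  also have "(\<Sum>x\<in>{x\<in>?C. amul x e \<in> perp n K M}. moment n K f x)
      = (\<Sum>u\<in>perp n K M. moment n K f (amul e u))"
    using e by (intro sum.reindex_bij_witness[where i="\<lambda>u. amul e u" and j="\<lambda>x. amul x e"])
      (auto simp: perp_def amul_in_carrierA amul_amul_cancel amul_commute[of e])
  finally show ?thesis .
qed

definition local_on :: "nat \<Rightarrow> (nat \<Rightarrow> bool) \<Rightarrow> nat set \<Rightarrow> (elt \<Rightarrow> real) \<Rightarrow> bool" where
  "local_on n K g f \<longleftrightarrow>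
     (\<forall>a\<in>carrierA n K. \<forall>a'\<in>carrierA n K. (\<forall>i\<in>g. a i = a' i) \<longrightarrow> f a = f a')"

lemma moment_eq_zero_if_local_on:
  assumes f: "local_on n K g f" and e: "e \<in> carrierA n K" and not_in: "\<not> supp n e \<subseteq> g"
  shows "moment n K f e = 0"
proof -
  obtain i where i: "i \<in> supp n e" "i \<notin> g"
    using not_in by blast
  obtain b where b: "b \<in> carrierA n K" "\<forall>j. j \<noteq> i \<longrightarrow> b j = oneA n K j" "bich n b e = -1"
    using exists_bich_minus_one_at[OF e i(1)] by metis
  have f_shift: "f (amul a b) = f a" if a: "a \<in> carrierA n K" for a
  proof -
    have "amul a b j = a j" if "j \<in> g" for j
    proof -
      have "b j = site_one (pauli_kind n K j)"
        using b(2) i(2) that by (auto simp: oneA_eq_site_one)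
      then show ?thesis
        using a by (simp add: amul_def carrierA_iff smul_site_one)
    qed
    moreover have "amul a b \<in> carrierA n K"
      using a b(1) by (rule amul_in_carrierA)
    ultimately show ?thesis
      using f a unfolding local_on_def by blast
  qed
  have "moment n K f e = (\<Sum>a\<in>carrierA n K. bich n e (amul a b) * f (amul a b))"
    unfolding moment_def
    using sum_subgroup_shift[OF is_subgroup_carrierA b(1), of "\<lambda>a. bich n e a * f a"] by simp
  also have "\<dots> = (\<Sum>a\<in>carrierA n K. - (bich n e a * f a))"
  proof (rule sum.cong[OF refl])
    fix a
    assume a: "a \<in> carrierA n K"
    have "bich n e (amul a b) = - bich n e a"
      using bich_amul[OF e a b(1)] bich_sym[of n e b] b(3) by simp
    then show "bich n e (amul a b) * f (amul a b) = - (bich n e a * f a)"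
      using f_shift[OF a] by simp
  qed
  also have "\<dots> = - moment n K f e"
    by (simp add: moment_def sum_negf)
  finally show ?thesis
    by simp
qed

lemma local_on_moment:
  assumes supported: "\<forall>e\<in>carrierA n K. \<not> supp n e \<subseteq> g \<longrightarrow> p e = 0"
  shows "local_on n K g (moment n K p)"
  unfolding local_on_def
proof (intro ballI impI)
  fix a a' :: elt
  assume agree: "\<forall>i\<in>g. a i = a' i"
  have bich_eq: "bich n a e = bich n a' e" if "supp n e \<subseteq> g" for e
    unfolding bich_def
  proof (rule prod.cong[OF refl])
    fix i
    assume "i \<in> {..<n}"
    then have "i \<in> g \<or> e i = Pa PI \<or> e i = Fb False"
      using that by (auto simp: supp_def)
    then show "sbich (a i) (e i) = sbich (a' i) (e i)"
      using agree by auto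
  qed
  show "moment n K p a = moment n K p a'"
    unfolding moment_def
  proof (rule sum.cong[OF refl])
    fix e
    assume "e \<in> carrierA n K"
    then show "bich n a e * p e = bich n a' e * p e"
      using supported bich_eq by (cases "supp n e \<subseteq> g") simp_all
  qed
qed

lemma local_on_combine:
  assumes f: "local_on n K g f" and h: "local_on n K g h"
  shows "local_on n K g (\<lambda>a. F (f a) (h a))"
  unfolding local_on_def
proof (intro ballI impI)
  fix a a'
  assume "a \<in> carrierA n K" "a' \<in> carrierA n K" "\<forall>i\<in>g. a i = a' i"
  with f h have "f a = f a'" "h a = h a'"
    unfolding local_on_def by blast+
  then show "F (f a) (h a) = F (f a') (h a')"
    by simp
qed

section \<open>Moments of channels\<close>

lemma sum_bich_shift:
  assumes a: "a \<in> carrierA n K" and b: "b \<in> carrierA n K"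
  shows "(\<Sum>x\<in>carrierA n K. bich n a x * g (amul x b)) = bich n a b * moment n K g a"
proof -
  let ?C = "carrierA n K"
  have "(\<Sum>x\<in>?C. bich n a x * g (amul x b)) = (\<Sum>x\<in>?C. bich n a (amul (amul x b) b) * g (amul x b))"
    using b by (intro sum.cong refl) (simp add: amul_amul_cancel)
  also have "\<dots> = (\<Sum>x\<in>?C. bich n a (amul x b) * g x)"
    using sum_subgroup_shift[OF is_subgroup_carrierA b, of "\<lambda>y. bich n a (amul y b) * g y"] by simp
  also have "\<dots> = (\<Sum>x\<in>?C. bich n a b * (bich n a x * g x))"
    using a b by (intro sum.cong refl) (simp add: bich_amul)
  finally show ?thesis
    by (simp add: moment_def sum_distrib_left)
qed

lemma moment_conv:
  assumes a: "a \<in> carrierA n K"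
  shows "moment n K (conv n K f g) a = moment n K f a * moment n K g a"
proof -
  let ?C = "carrierA n K"
  have "moment n K (conv n K f g) a = (\<Sum>x\<in>?C. \<Sum>b\<in>?C. f b * (bich n a x * g (amul x b)))"
    unfolding moment_def conv_def ainv_def
    by (intro sum.cong refl) (simp add: sum_distrib_left mult_ac)
  also have "\<dots> = (\<Sum>b\<in>?C. f b * (\<Sum>x\<in>?C. bich n a x * g (amul x b)))"
    by (subst sum.swap) (simp add: sum_distrib_left)
  also have "\<dots> = (\<Sum>b\<in>?C. f b * (bich n a b * moment n K g a))"
    using a by (intro sum.cong refl) (simp add: sum_bich_shift)
  finally show ?thesis
    by (simp add: moment_def sum_distrib_right mult_ac)
qed

lemma moment_delta_one: "moment n K (delta_one n K) a = 1"
proof -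
  have "moment n K (delta_one n K) a = (\<Sum>e\<in>carrierA n K. if e = oneA n K then 1 else 0)"
    unfolding moment_def delta_one_def by (intro sum.cong refl) simp
  then show ?thesis
    by (simp add: oneA_in_carrierA finite_carrierA)
qed

lemma moment_conv_list:
  "a \<in> carrierA n K \<Longrightarrow> moment n K (conv_list n K fs) a = (\<Prod>f\<leftarrow>fs. moment n K f a)"
  by (induction fs) (simp_all add: conv_list_def moment_delta_one moment_conv)

lemma moment_channel:
  "a \<in> carrierA n K \<Longrightarrow> distinct gs \<Longrightarrow>
   moment n K (channel n K gs Pg) a = (\<Prod>\<gamma>\<in>set gs. moment n K (Pg \<gamma>) a)"
  by (simp add: channel_def moment_conv_list prod.distinct_set_conv_list comp_def)

lemma ln_moment_channel:
  assumes "a \<in> carrierA n K" and "distinct gs" and pos: "moment n K (channel n K gs Pg) a > 0"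
  shows "ln (moment n K (channel n K gs Pg) a) = (\<Sum>\<gamma>\<in>set gs. ln \<bar>moment n K (Pg \<gamma>) a\<bar>)"
proof -
  have prod: "moment n K (channel n K gs Pg) a = (\<Prod>\<gamma>\<in>set gs. moment n K (Pg \<gamma>) a)"
    using assms(1,2) by (rule moment_channel)
  with pos have "moment n K (Pg \<gamma>) a \<noteq> 0" if "\<gamma> \<in> set gs" for \<gamma>
    using that by (metis finite_set less_irrefl prod_zero_iff)
  moreover have "ln (moment n K (channel n K gs Pg) a) = ln (\<Prod>\<gamma>\<in>set gs. \<bar>moment n K (Pg \<gamma>) a\<bar>)"
    using pos by (simp add: prod abs_prod[symmetric])
  ultimately show ?thesis
    by (simp add: ln_prod)
qed

lemma sum_coset_eq_sum_perp_moment: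
  assumes G: "is_subgroup n K G" and e: "e \<in> carrierA n K"
  shows "real (card (carrierA n K)) * (\<Sum>s\<in>G. p (amul e s))
    = real (card G) * (\<Sum>a\<in>perp n K G. moment n K p a * bich n a e)"
proof -
  let ?C = "carrierA n K"
  have GC: "G \<subseteq> ?C"
    using subgroup_subset_carrierA[OF G] .
  have "real (card ?C) * (\<Sum>s\<in>G. p (amul e s)) = (\<Sum>s\<in>G. moment n K (moment n K p) (amul e s))"
    using GC e by (auto simp: sum_distrib_left moment_moment amul_in_carrierA intro!: sum.cong)
  also have "\<dots> = (\<Sum>s\<in>G. \<Sum>a\<in>?C. moment n K p a * bich n a e * bich n s a)"
    unfolding moment_def[of n K "moment n K p"]
    using GC e by (intro sum.cong refl) (auto simp: bich_amul_left bich_sym[of n e] mult_ac)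
  also have "\<dots> = (\<Sum>a\<in>?C. moment n K p a * bich n a e * (\<Sum>s\<in>G. bich n s a))"
    by (subst sum.swap) (simp add: sum_distrib_left)
  also have "\<dots> = (\<Sum>a\<in>?C. if a \<in> perp n K G then real (card G) * (moment n K p a * bich n a e) else 0)"
    by (intro sum.cong refl) (simp add: sum_bich_subgroup[OF G])
  also have "\<dots> = real (card G) * (\<Sum>a\<in>?C. if a \<in> perp n K G then moment n K p a * bich n a e else 0)"
    unfolding sum_distrib_left by (intro sum.cong) simp_all
  also have "\<dots> = real (card G) * (\<Sum>a\<in>perp n K G. moment n K p a * bich n a e)"
    using perp_subset_carrierA[of n K G]
    by (simp add: sum.inter_restrict[symmetric] finite_carrierA Int_absorb1)
  finally show ?thesis .
qed

lemma logical_channel_eq_if_moments_eq_on_perp: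
  assumes G: "is_subgroup n K G" and e: "e \<in> carrierA n K"
    and eq: "\<forall>a\<in>perp n K G. moment n K p a = moment n K q a"
  shows "logical_channel G p e = logical_channel G q e"
proof -
  have "real (card (carrierA n K)) * (\<Sum>s\<in>G. p (amul e s))
      = real (card (carrierA n K)) * (\<Sum>s\<in>G. q (amul e s))"
    using eq by (simp add: sum_coset_eq_sum_perp_moment[OF G e])
  moreover have "card (carrierA n K) > 0"
    using card_subgroup_pos[OF is_subgroup_carrierA] .
  ultimately show ?thesis
    by (simp add: logical_channel_def)
qed

section \<open>Correctable channels\<close>

lemma bich_perp_eq_if_correctable:
  assumes correctable: "correctable_region n K G M (\<gamma>1 \<union> \<gamma>2)"
    and a: "a \<in> perp n K G" and x: "x \<in> carrierA n K" and y: "y \<in> carrierA n K"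
    and xy: "amul x y \<in> perp n K M" and "supp n x \<subseteq> \<gamma>1" and "supp n y \<subseteq> \<gamma>2"
  shows "bich n a x = bich n a y"
proof -
  have "supp n (amul x y) \<subseteq> \<gamma>1 \<union> \<gamma>2"
    using supp_amul_subset[OF x y] assms(6,7) by blast
  with correctable xy have "amul x y \<in> G"
    by (simp add: correctable_region_def)
  with a have "bich n a (amul x y) = 1"
    by (simp add: perp_def)
  moreover have "bich n a x = bich n a (amul (amul x y) y)"
    by (simp only: amul_amul_cancel[OF x y])
  moreover have "\<dots> = bich n a (amul x y) * bich n a y"
    using a perp_subset_carrierA x y by (blast intro: bich_amul amul_in_carrierA)
  ultimately show ?thesis
    by simp
qed

lemma bich_times_eq_on_coset:
  assumes M: "is_subgroup n K M"
    and correctable: "\<forall>\<gamma>1\<in>\<Gamma>. \<forall>\<gamma>2\<in>\<Gamma>. correctable_region n K G M (\<gamma>1 \<union> \<gamma>2)"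
    and c_local: "\<forall>x\<in>carrierA n K. (\<forall>\<gamma>\<in>\<Gamma>. \<not> supp n x \<subseteq> \<gamma>) \<longrightarrow> c x = 0"
    and a: "a \<in> perp n K G" and e: "e \<in> carrierA n K"
    and u: "u \<in> perp n K M" and u0: "u0 \<in> perp n K M"
    and \<gamma>2: "\<gamma>2 \<in> \<Gamma>" "supp n (amul e u0) \<subseteq> \<gamma>2"
  shows "bich n a (amul e u) * c (amul e u) = bich n a (amul e u0) * c (amul e u)"
proof (cases "\<exists>\<gamma>1\<in>\<Gamma>. supp n (amul e u) \<subseteq> \<gamma>1")
  case True
  then obtain \<gamma>1 where \<gamma>1: "\<gamma>1 \<in> \<Gamma>" "supp n (amul e u) \<subseteq> \<gamma>1"
    by blast
  have uC: "u \<in> carrierA n K" and u0C: "u0 \<in> carrierA n K"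
    using u u0 perp_subset_carrierA by blast+
  have "amul u u0 \<in> perp n K M"
    using is_subgroup_perp[OF subgroup_subset_carrierA[OF M]] u u0 by (rule subgroup_amul)
  then have "amul (amul e u) (amul e u0) \<in> perp n K M"
    by (simp add: amul_amul_left_cancel[OF e uC u0C])
  with correctable \<gamma>1 \<gamma>2 a e uC u0C have "bich n a (amul e u) = bich n a (amul e u0)"
    by (intro bich_perp_eq_if_correctable[of n K G M \<gamma>1 \<gamma>2]) (auto intro: amul_in_carrierA)
  then show ?thesis
    by simp
next
  case False
  with c_local e u perp_subset_carrierA have "c (amul e u) = 0"
    by (blast intro: amul_in_carrierA)
  then show ?thesis
    by simp
qed

lemma sum_coset_bich_eq_zero:
  assumes M: "is_subgroup n K M"
    and correctable: "\<forall>\<gamma>1\<in>\<Gamma>. \<forall>\<gamma>2\<in>\<Gamma>. correctable_region n K G M (\<gamma>1 \<union> \<gamma>2)"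
    and c_local: "\<forall>x\<in>carrierA n K. (\<forall>\<gamma>\<in>\<Gamma>. \<not> supp n x \<subseteq> \<gamma>) \<longrightarrow> c x = 0"
    and a: "a \<in> perp n K G" and e: "e \<in> carrierA n K"
    and coset_sum: "(\<Sum>u\<in>perp n K M. c (amul e u)) = 0"
  shows "(\<Sum>u\<in>perp n K M. bich n a (amul e u) * c (amul e u)) = 0"
proof (cases "\<exists>u\<in>perp n K M. \<exists>\<gamma>\<in>\<Gamma>. supp n (amul e u) \<subseteq> \<gamma>")
  case True
  then obtain u0 \<gamma>2 where u0: "u0 \<in> perp n K M" and \<gamma>2: "\<gamma>2 \<in> \<Gamma>" "supp n (amul e u0) \<subseteq> \<gamma>2"
    by blast
  have "(\<Sum>u\<in>perp n K M. bich n a (amul e u) * c (amul e u))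
      = (\<Sum>u\<in>perp n K M. bich n a (amul e u0) * c (amul e u))"
    using bich_times_eq_on_coset[OF M correctable c_local a e _ u0 \<gamma>2] by (rule sum.cong[OF refl])
  also have "\<dots> = bich n a (amul e u0) * (\<Sum>u\<in>perp n K M. c (amul e u))"
    by (simp add: sum_distrib_left)
  finally show ?thesis
    using coset_sum by simp
next
  case False
  with c_local e perp_subset_carrierA have "c (amul e u) = 0" if "u \<in> perp n K M" for u
    using that by (blast intro: amul_in_carrierA)
  then show ?thesis
    by simp
qed

lemma moment_eq_zero_on_perp_gauge:
  assumes M: "is_subgroup n K M"
    and correctable: "\<forall>\<gamma>1\<in>\<Gamma>. \<forall>\<gamma>2\<in>\<Gamma>. correctable_region n K G M (\<gamma>1 \<union> \<gamma>2)"
    and c_local: "\<forall>x\<in>carrierA n K. (\<forall>\<gamma>\<in>\<Gamma>. \<not> supp n x \<subseteq> \<gamma>) \<longrightarrow> c x = 0"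
    and coset_sums: "\<forall>e\<in>carrierA n K. (\<Sum>u\<in>perp n K M. c (amul e u)) = 0"
    and a: "a \<in> perp n K G"
  shows "moment n K c a = 0"
proof -
  let ?C = "carrierA n K" and ?P = "perp n K M"
  have "(\<Sum>e\<in>?C. bich n a (amul e u) * c (amul e u)) = moment n K c a" if "u \<in> ?P" for u
  proof -
    have "u \<in> ?C"
      using that perp_subset_carrierA by blast
    from sum_subgroup_shift[OF is_subgroup_carrierA this, of "\<lambda>x. bich n a x * c x"] show ?thesis
      unfolding moment_def by simp
  qed
  then have "real (card ?P) * moment n K c a = (\<Sum>u\<in>?P. \<Sum>e\<in>?C. bich n a (amul e u) * c (amul e u))"
    by simp
  also have "\<dots> = (\<Sum>e\<in>?C. \<Sum>u\<in>?P. bich n a (amul e u) * c (amul e u))"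
    by (rule sum.swap)
  also have "\<dots> = 0"
    using sum_coset_bich_eq_zero[OF M correctable c_local a] coset_sums by simp
  finally show ?thesis
    using card_subgroup_pos[OF is_subgroup_perp[OF subgroup_subset_carrierA[OF M]]] by simp
qed

lemma local_sum_eq_zero_on_perp_gauge:
  assumes M: "is_subgroup n K M"
    and correctable: "\<forall>\<gamma>1\<in>\<Gamma>. \<forall>\<gamma>2\<in>\<Gamma>. correctable_region n K G M (\<gamma>1 \<union> \<gamma>2)"
    and "finite \<Gamma>"
    and D_sum: "\<forall>a\<in>carrierA n K. D a = (\<Sum>\<gamma>\<in>\<Gamma>. d \<gamma> a)"
    and d_local: "\<forall>\<gamma>\<in>\<Gamma>. local_on n K \<gamma> (d \<gamma>)"
    and D_M: "\<forall>m\<in>M. D m = 0"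
    and a: "a \<in> perp n K G"
  shows "D a = 0"
proof -
  have "moment n K D e = 0" if e: "e \<in> carrierA n K" and "\<forall>\<gamma>\<in>\<Gamma>. \<not> supp n e \<subseteq> \<gamma>" for e
  proof -
    have "moment n K D e = (\<Sum>\<gamma>\<in>\<Gamma>. moment n K (d \<gamma>) e)"
      unfolding moment_def using D_sum
      by (simp add: sum_distrib_left sum.swap[of _ \<Gamma>])
    also have "\<dots> = 0"
      using d_local e that by (auto intro!: sum.neutral moment_eq_zero_if_local_on)
    finally show ?thesis .
  qed
  moreover have "(\<Sum>u\<in>perp n K M. moment n K D (amul e u)) = 0" if e: "e \<in> carrierA n K" for e
    using poisson_summation[OF M e, of D] D_M card_subgroup_pos[OF M] by simp
  ultimately have "moment n K (moment n K D) a = 0"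
    using moment_eq_zero_on_perp_gauge[OF M correctable _ _ a] by blast
  moreover have "a \<in> carrierA n K"
    using a perp_subset_carrierA by blast
  ultimately show ?thesis
    using moment_moment[of a n K D] card_subgroup_pos[OF is_subgroup_carrierA, of n K] by simp
qed

theorem theorem2:
  fixes n :: nat and K :: "nat \<Rightarrow> bool"
    and G M :: "elt set" and gs :: "nat set list"
    and Pg Qg :: "nat set \<Rightarrow> elt \<Rightarrow> real"
  assumes G_sub: "is_subgroup n K G"
    and M_sub: "is_subgroup n K M"
    and G_perp: "G \<subseteq> perp n K M"
    and gs_dist: "distinct gs"
    and Gamma_sub: "set gs \<subseteq> Pow {..<n}"
    and Pg_loc: "local_family n K gs Pg"
    and Qg_loc: "local_family n K gs Qg"
    and corr_reg: "\<forall>\<gamma>1\<in>set gs. \<forall>\<gamma>2\<in>set gs. correctable_region n K G M (\<gamma>1 \<union> \<gamma>2)"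
    and P_pos: "\<forall>a\<in>carrierA n K. moment n K (channel n K gs Pg) a > 0"
    and Q_pos: "\<forall>a\<in>carrierA n K. moment n K (channel n K gs Qg) a > 0"
    and agree: "\<forall>s\<in>M. moment n K (channel n K gs Pg) s = moment n K (channel n K gs Qg) s"
  shows "\<forall>e\<in>carrierA n K.
           logical_channel G (channel n K gs Pg) e = logical_channel G (channel n K gs Qg) e"
proof -
  let ?mP = "moment n K (channel n K gs Pg)" and ?mQ = "moment n K (channel n K gs Qg)"
  define d where "d = (\<lambda>\<gamma> a. ln (\<bar>moment n K (Pg \<gamma>) a\<bar>) - ln (\<bar>moment n K (Qg \<gamma>) a\<bar>))"
  have D_sum: "\<forall>a\<in>carrierA n K. ln (?mP a) - ln (?mQ a) = (\<Sum>\<gamma>\<in>set gs. d \<gamma> a)"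
    using ln_moment_channel gs_dist P_pos Q_pos by (simp add: d_def sum_subtractf)
  have d_local: "\<forall>\<gamma>\<in>set gs. local_on n K \<gamma> (d \<gamma>)"
  proof
    fix \<gamma>
    assume "\<gamma> \<in> set gs"
    then have "local_on n K \<gamma> (moment n K (Pg \<gamma>))" "local_on n K \<gamma> (moment n K (Qg \<gamma>))"
      using Pg_loc Qg_loc by (simp_all add: local_family_def local_on_moment)
    from local_on_combine[OF this, where F="\<lambda>x y. ln \<bar>x\<bar> - ln \<bar>y\<bar>"] show "local_on n K \<gamma> (d \<gamma>)"
      by (simp add: d_def)
  qed
  have "ln (?mP a) - ln (?mQ a) = 0" if "a \<in> perp n K G" for a
    using agree by (intro local_sum_eq_zero_on_perp_gauge[OF M_sub corr_reg finite_set D_sum d_local _ that]) simp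
  then have "\<forall>a\<in>perp n K G. ?mP a = ?mQ a"
    using P_pos Q_pos perp_subset_carrierA by fastforce
  then show ?thesis
    using logical_channel_eq_if_moments_eq_on_perp[OF G_sub] by blast
qed

end
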